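(* Let $(G,\mathcal F_\bullet G,\mathfrak R)$ be a filtered Rota–Baxter group such that $\mathsf{gr}\,G$ has a structure of a $\mathbb Q$-Lie algebra (i.e. each $\mathsf{gr}_nG$ is a uniquely divisible abelian group, with $\mathbb Q$-action determined by $m\cdot\bar x=\overline{x^m}$). Then the map $\mathsf{gr}\,\mathfrak R:\mathsf{gr}\,G\to\mathsf{gr}\,G$ is $\mathbb Q$-linear and $(\mathsf{gr}\,G,\mathsf{gr}\,\mathfrak R)$ is a graded Rota–Baxter $\mathbb Q$-Lie algebra.
   Context: For a group $G$ write $(x,y)=xyx^{-1}y^{-1}$. A filtered group is a group with subgroups $G=\mathcal F_1G\supset\mathcal F_2G\supset\cdots$ such that the subgroup generated by commutators $(x,y)$, $x\in\mathcal F_nG$, $y\in\mathcal F_mG$, lies in $\mathcal F_{n+m}G$. Then $\mathsf{gr}_nG=\mathcal F_nG/\mathcal F_{n+1}G$ is abelian, written additively ($\bar x+\bar y=\overline{xy}$), and $\mathsf{gr}\,G=\bigoplus_{n\ge1}\mathsf{gr}_nG$ is a graded Lie ring with bracket determined by $[\bar x,\bar y]=\overline{(x,y)}\in\mathsf{gr}_{n+m}G$ for $x\in\mathcal F_nG,y\in\mathcal F_mG$. A filtered Rota–Baxter group is a filtered group with a map $\mathfrak R$ satisfying $\mathfrak R(g)\mathfrak R(h)=\mathfrak R(g\mathfrak R(g)h\mathfrak R(g)^{-1})$ and $\mathfrak R(\mathcal F_nG)\subset\mathcal F_nG$. $\mathsf{gr}\,\mathfrak R$ is the additive map acting on $\mathsf{gr}_nG$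 by $\bar x\mapsto\overline{\mathfrak R(x)}$ (well defined). A graded Rota–Baxter ($\mathbb Q$-)Lie algebra is a graded Lie algebra with a linear map $P$ preserving each graded component and satisfying $[P(a),P(b)]=P([P(a),b]+[a,P(b)]+[a,b])$. *)

theory Defs
  imports "HOL-Algebra.Algebra"
begin

definition gcomm :: "('a, 'b) monoid_scheme \<Rightarrow> 'a \<Rightarrow> 'a \<Rightarrow> 'a" where
  "gcomm G x y = x \<otimes>\<^bsub>G\<^esub> y \<otimes>\<^bsub>G\<^esub> inv\<^bsub>G\<^esub> x \<otimes>\<^bsub>G\<^esub> inv\<^bsub>G\<^esub> y"

definition filtered_group :: "('a, 'b) monoid_scheme \<Rightarrow> (nat \<Rightarrow> 'a set) \<Rightarrow> bool" where
  "filtered_group G F \<longleftrightarrow> group G \<and> F 1 = carrier G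
     \<and> (\<forall>n\<ge>1. subgroup (F n) G \<and> F (Suc n) \<subseteq> F n)
     \<and> (\<forall>n\<ge>1. \<forall>m\<ge>1. generate G {gcomm G x y | x y. x \<in> F n \<and> y \<in> F m} \<subseteq> F (n + m))"

definition rota_baxter_group :: "('a, 'b) monoid_scheme \<Rightarrow> ('a \<Rightarrow> 'a) \<Rightarrow> bool" where
  "rota_baxter_group G R \<longleftrightarrow> (\<forall>g\<in>carrier G. \<forall>h\<in>carrier G.
     R g \<otimes>\<^bsub>G\<^esub> R h = R (g \<otimes>\<^bsub>G\<^esub> R g \<otimes>\<^bsub>G\<^esub> h \<otimes>\<^bsub>G\<^esub> inv\<^bsub>G\<^esub> (R g)))"

definition filtered_rota_baxter_group ::
  "('a, 'b) monoid_scheme \<Rightarrow> (nat \<Rightarrow> 'a set) \<Rightarrow> ('a \<Rightarrow> 'a) \<Rightarrow> bool" where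
  "filtered_rota_baxter_group G F R \<longleftrightarrow> filtered_group G F \<and> rota_baxter_group G R
     \<and> (\<forall>n\<ge>1. R ` F n \<subseteq> F n)"

text \<open>The graded piece gr_n G = F_n G / F_{n+1} G (as a HOL-Algebra quotient group);
  its group operation (set product of cosets) is the addition of gr_n G.\<close>
definition grp :: "('a, 'b) monoid_scheme \<Rightarrow> (nat \<Rightarrow> 'a set) \<Rightarrow> nat \<Rightarrow> 'a set monoid" where
  "grp G F n = (G\<lparr>carrier := F n\<rparr>) Mod F (Suc n)"

definition grR :: "('a, 'b) monoid_scheme \<Rightarrow> (nat \<Rightarrow> 'a set) \<Rightarrow> ('a \<Rightarrow> 'a) \<Rightarrow> nat \<Rightarrow> 'a set \<Rightarrow> 'a set" where
  "grR G F R n A = r_coset G (F (Suc n)) (R (SOME x. x \<in> A))"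

definition grbr :: "('a, 'b) monoid_scheme \<Rightarrow> (nat \<Rightarrow> 'a set) \<Rightarrow> nat \<Rightarrow> nat \<Rightarrow> 'a set \<Rightarrow> 'a set \<Rightarrow> 'a set" where
  "grbr G F n m A B = r_coset G (F (Suc (n + m))) (gcomm G (SOME x. x \<in> A) (SOME y. y \<in> B))"

definition gr_uniquely_divisible :: "('a, 'b) monoid_scheme \<Rightarrow> (nat \<Rightarrow> 'a set) \<Rightarrow> bool" where
  "gr_uniquely_divisible G F \<longleftrightarrow> (\<forall>n\<ge>1. \<forall>A\<in>carrier (grp G F n). \<forall>k::nat. k > 0 \<longrightarrow>
     (\<exists>!B. B \<in> carrier (grp G F n) \<and> B [^]\<^bsub>grp G F n\<^esub> k = A))"

definition qact :: "('a, 'b) monoid_scheme \<Rightarrow> (nat \<Rightarrow> 'a set) \<Rightarrow> nat \<Rightarrow> rat \<Rightarrow> 'a set \<Rightarrow> 'a set" where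
  "qact G F n q A = (THE B. B \<in> carrier (grp G F n) \<and>
      B [^]\<^bsub>grp G F n\<^esub> (snd (quotient_of q)) = A [^]\<^bsub>grp G F n\<^esub> (fst (quotient_of q)))"

text \<open>The direct sum gr G = \<Oplus>_{n\<ge>1} gr_n G, as finitely supported families
  (the index 0 is unused and fixed to the dummy value F 1).\<close>
definition gr_carrier :: "('a, 'b) monoid_scheme \<Rightarrow> (nat \<Rightarrow> 'a set) \<Rightarrow> (nat \<Rightarrow> 'a set) set" where
  "gr_carrier G F = {f. f 0 = F 1 \<and> (\<forall>n\<ge>1. f n \<in> carrier (grp G F n))
      \<and> finite {n. f n \<noteq> \<one>\<^bsub>grp G F n\<^esub>}}"

definition gr_add :: "('a, 'b) monoid_scheme \<Rightarrow> (nat \<Rightarrow> 'a set) \<Rightarrow> (nat \<Rightarrow> 'a set) \<Rightarrow> (nat \<Rightarrow> 'a set) \<Rightarrow> nat \<Rightarrow> 'a set" where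
  "gr_add G F f g = (\<lambda>n. if n = 0 then F 1 else f n \<otimes>\<^bsub>grp G F n\<^esub> g n)"

definition gr_smult :: "('a, 'b) monoid_scheme \<Rightarrow> (nat \<Rightarrow> 'a set) \<Rightarrow> rat \<Rightarrow> (nat \<Rightarrow> 'a set) \<Rightarrow> nat \<Rightarrow> 'a set" where
  "gr_smult G F q f = (\<lambda>n. if n = 0 then F 1 else qact G F n q (f n))"

definition gr_bracket :: "('a, 'b) monoid_scheme \<Rightarrow> (nat \<Rightarrow> 'a set) \<Rightarrow> (nat \<Rightarrow> 'a set) \<Rightarrow> (nat \<Rightarrow> 'a set) \<Rightarrow> nat \<Rightarrow> 'a set" where
  "gr_bracket G F f g = (\<lambda>k. if k = 0 then F 1 else
      finprod (grp G F k) (\<lambda>n. grbr G F n (k - n) (f n) (g (k - n))) {1..<k})"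

definition gr_map :: "('a, 'b) monoid_scheme \<Rightarrow> (nat \<Rightarrow> 'a set) \<Rightarrow> ('a \<Rightarrow> 'a) \<Rightarrow> (nat \<Rightarrow> 'a set) \<Rightarrow> nat \<Rightarrow> 'a set" where
  "gr_map G F R f = (\<lambda>n. if n = 0 then F 1 else grR G F R n (f n))"

end

theory Submission
  imports Defs
begin

(* Modulo F_(n+1), conjugation acts trivially on F_n, since (g, a) lies in F_(n+1)
   for a in F_n.  Hence the classes of R x and of commutators depend only on the classes
   of their arguments, and x R(x) y R(x)^-1 is congruent to x y, so the Rota-Baxter
   identity R(x) R(y) = R(x R(x) y R(x)^-1) makes gr R additive on every gr_n G; an
   additive endomorphism of a uniquely divisible group commutes with the rational action.
   For the bracket, R(g) R(h)^-1 = R(g t h^-1 t^-1) with t = R(g) R(h)^-1 writes (R x, R y)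
   as R z with z congruent to (R x, y) (x, R y) (x, y) modulo F_(n+m+1); the graded
   identity follows degreewise, gr R commuting with the finite sums defining the bracket. *)

section \<open>Commutators, cosets and roots in groups\<close>

lemma (in group) mult_inv_cancel_left:
  "x \<in> carrier G \<Longrightarrow> y \<in> carrier G \<Longrightarrow> x \<otimes> (inv x \<otimes> y) = y"
  by (simp add: m_assoc [symmetric])

lemma (in group) inv_mult_cancel_left:
  "x \<in> carrier G \<Longrightarrow> y \<in> carrier G \<Longrightarrow> inv x \<otimes> (x \<otimes> y) = y"
  by (simp add: m_assoc [symmetric])

lemmas (in group) group_word_simps =
  m_assoc inv_mult_group mult_inv_cancel_left inv_mult_cancel_left gcomm_def

lemma (in group) gcomm_closed [simp]:
  "x \<in> carrier G \<Longrightarrow> y \<in> carrier G \<Longrightarrow> gcomm G x y \<in> carrier G"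
  by (simp add: gcomm_def)

lemma (in group) conj_eq_gcomm_mult:
  "g \<in> carrier G \<Longrightarrow> a \<in> carrier G \<Longrightarrow> g \<otimes> a \<otimes> inv g = gcomm G g a \<otimes> a"
  by (simp add: group_word_simps)

lemma (in group) some_in_rcos:
  assumes "subgroup H G" and "x \<in> carrier G"
  shows "\<exists>a\<in>H. (SOME y. y \<in> H #> x) = a \<otimes> x"
proof -
  have "(SOME y. y \<in> H #> x) \<in> H #> x"
    using rcos_self [OF assms(2,1)] by (rule someI)
  then show ?thesis
    unfolding r_coset_def by blast
qed

lemma (in comm_group) hom_finprod:
  assumes h: "h \<in> hom G H" and H: "comm_group H" and f: "f \<in> A \<rightarrow> carrier G"
  shows "h (finprod G f A) = finprod H (h \<circ> f) A"
proof -
  interpret H: comm_group H by (rule H)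
  interpret group_hom G H h
    using h by unfold_locales
  show ?thesis
    using f by (induct A rule: infinite_finite_induct) (auto simp: Pi_def)
qed

lemma (in group) hom_the_root:
  assumes h: "h \<in> hom G G" and A: "A \<in> carrier G"
    and roots: "\<forall>C\<in>carrier G. \<exists>!B. B \<in> carrier G \<and> B [^] (d::int) = C"
  shows "h (THE B. B \<in> carrier G \<and> B [^] d = A [^] (p::int))
    = (THE B. B \<in> carrier G \<and> B [^] d = h A [^] p)"
proof -
  let ?B = "THE B. B \<in> carrier G \<and> B [^] d = A [^] p"
  have hA: "h A \<in> carrier G"
    using h A by (rule hom_in_carrier)
  have B: "?B \<in> carrier G" "?B [^] d = A [^] p"
    using theI' [OF roots [rule_format, OF int_pow_closed [OF A]]] by simp_all
  have "h ?B [^] d = h (?B [^] d)"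
    using hom_int_pow [OF h B(1) is_group is_group] by simp
  also have "\<dots> = h A [^] p"
    using hom_int_pow [OF h A is_group is_group] B(2) by simp
  finally have "h ?B [^] d = h A [^] p" .
  moreover have "h ?B \<in> carrier G"
    using h B(1) by (rule hom_in_carrier)
  ultimately show ?thesis
    using roots [rule_format, OF int_pow_closed [OF hA]] by (intro the1_equality [symmetric]) simp_all
qed

section \<open>Rota--Baxter groups\<close>

locale rota_baxter = group G for G (structure) +
  fixes R :: "'a \<Rightarrow> 'a"
  assumes rota_baxter_group: "rota_baxter_group G R"
    and R_closed [simp]: "x \<in> carrier G \<Longrightarrow> R x \<in> carrier G"
begin

lemma R_mult:
  "g \<in> carrier G \<Longrightarrow> h \<in> carrier G \<Longrightarrow> R g \<otimes> R h = R (g \<otimes> R g \<otimes> h \<otimes> inv (R g))"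
  using rota_baxter_group by (simp add: rota_baxter_group_def)

lemma R_one: "R \<one> = \<one>"
proof -
  have "R \<one> \<otimes> R \<one> = R \<one>"
    using R_mult [of \<one> \<one>] by simp
  then show ?thesis by simp
qed

lemma inv_R:
  assumes g: "g \<in> carrier G"
  shows "inv (R g) = R (inv (R g) \<otimes> inv g \<otimes> R g)"
proof (rule inv_equality)
  have "g \<otimes> R g \<otimes> (inv (R g) \<otimes> inv g \<otimes> R g) \<otimes> inv (R g) = \<one>"
    using g by (simp add: group_word_simps)
  then have "R g \<otimes> R (inv (R g) \<otimes> inv g \<otimes> R g) = \<one>"
    using R_mult [of g "inv (R g) \<otimes> inv g \<otimes> R g"] g by (simp add: R_one)
  then show "R (inv (R g) \<otimes> inv g \<otimes> R g) \<otimes> R g = \<one>"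
    by (rule inv_comm) (simp_all add: g)
qed (use g in auto)

lemma R_mult_inv_R:
  assumes g: "g \<in> carrier G" and h: "h \<in> carrier G"
  shows "R g \<otimes> inv (R h)
    = R (g \<otimes> (R g \<otimes> inv (R h)) \<otimes> inv h \<otimes> inv (R g \<otimes> inv (R h)))"
proof -
  have "R g \<otimes> inv (R h) = R g \<otimes> R (inv (R h) \<otimes> inv h \<otimes> R h)"
    using h by (simp add: inv_R [symmetric])
  also have "\<dots> = R (g \<otimes> R g \<otimes> (inv (R h) \<otimes> inv h \<otimes> R h) \<otimes> inv (R g))"
    using g h by (simp add: R_mult)
  also have "\<dots> = R (g \<otimes> (R g \<otimes> inv (R h)) \<otimes> inv h \<otimes> inv (R g \<otimes> inv (R h)))"
    using g h by (simp add: group_word_simps)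
  finally show ?thesis .
qed

lemma gcomm_R_R:
  assumes x: "x \<in> carrier G" and y: "y \<in> carrier G"
  defines "u \<equiv> x \<otimes> R x \<otimes> y \<otimes> inv (R x)" and "v \<equiv> y \<otimes> R y \<otimes> x \<otimes> inv (R y)"
    and "t \<equiv> gcomm G (R x) (R y)"
  shows "t = R (u \<otimes> inv v \<otimes> gcomm G v t)"
proof -
  have [simp]: "u \<in> carrier G" "v \<in> carrier G"
    using x y by (simp_all add: u_def v_def)
  have "R x \<otimes> R y = R u" "R y \<otimes> R x = R v"
    using x y by (simp_all add: u_def v_def R_mult)
  moreover have "t = (R x \<otimes> R y) \<otimes> inv (R y \<otimes> R x)"
    using x y by (simp add: t_def group_word_simps)
  ultimately have t_eq: "t = R u \<otimes> inv (R v)"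
    by simp
  have "t = R (u \<otimes> t \<otimes> inv v \<otimes> inv t)"
    using R_mult_inv_R [of u v] unfolding t_eq [symmetric] by simp
  moreover have "u \<otimes> t \<otimes> inv v \<otimes> inv t = u \<otimes> inv v \<otimes> gcomm G v t"
    using x y by (simp add: t_def group_word_simps)
  ultimately show ?thesis
    by simp
qed

end

section \<open>Filtered groups and their graded pieces\<close>

locale filtration =
  fixes G :: "('a, 'b) monoid_scheme" (structure) and F :: "nat \<Rightarrow> 'a set"
  assumes filtered_group: "filtered_group G F"
begin

sublocale group G
  using filtered_group by (simp add: filtered_group_def)

lemma F_1: "F 1 = carrier G"
  using filtered_group by (simp add: filtered_group_def)

lemma subgroup_F: "n \<ge> 1 \<Longrightarrow> subgroup (F n) G"
  using filtered_group by (simp add: filtered_group_def)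

lemma F_subset_carrier: "n \<ge> 1 \<Longrightarrow> F n \<subseteq> carrier G"
  by (rule subgroup.subset [OF subgroup_F])

lemma F_carrier: "n \<ge> 1 \<Longrightarrow> x \<in> F n \<Longrightarrow> x \<in> carrier G"
  using F_subset_carrier by blast

lemma F_mult: "n \<ge> 1 \<Longrightarrow> x \<in> F n \<Longrightarrow> y \<in> F n \<Longrightarrow> x \<otimes> y \<in> F n"
  by (rule subgroup.m_closed [OF subgroup_F])

lemma F_Suc_subset: "n \<ge> 1 \<Longrightarrow> F (Suc n) \<subseteq> F n"
  using filtered_group by (simp add: filtered_group_def)

lemma F_antimono:
  assumes "1 \<le> n" and "n \<le> m"
  shows "F m \<subseteq> F n"
  using assms(2)
proof (induction m rule: dec_induct)
  case (step k)
  then show ?case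
    using F_Suc_subset [of k] assms(1) by auto
qed simp

lemma gcomm_F:
  assumes "n \<ge> 1" "m \<ge> 1" "x \<in> F n" "y \<in> F m"
  shows "gcomm G x y \<in> F (n + m)"
proof -
  have "generate G {gcomm G x y | x y. x \<in> F n \<and> y \<in> F m} \<subseteq> F (n + m)"
    using filtered_group assms(1,2) unfolding filtered_group_def by blast
  moreover have "gcomm G x y \<in> generate G {gcomm G x y | x y. x \<in> F n \<and> y \<in> F m}"
    using assms(3,4) by (intro generate.incl) blast
  ultimately show ?thesis by blast
qed

lemma gcomm_F_Suc:
  assumes "n \<ge> 1" "g \<in> carrier G" "a \<in> F n"
  shows "gcomm G g a \<in> F (Suc n)"
proof -
  have "g \<in> F 1"
    using assms(2) by (simp only: F_1)
  then show ?thesis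
    using gcomm_F [of 1 n g a] assms(1,3) by simp
qed

lemma normal_F: "n \<ge> 1 \<Longrightarrow> F n \<lhd> G"
proof (unfold normal_inv_iff, intro conjI ballI subgroup_F)
  fix g a assume n: "n \<ge> 1" and g: "g \<in> carrier G" and a: "a \<in> F n"
  have "gcomm G g a \<in> F n"
    using gcomm_F_Suc [OF n g a] F_Suc_subset [OF n] by blast
  then show "g \<otimes> a \<otimes> inv g \<in> F n"
    using conj_eq_gcomm_mult [of g a] F_mult [OF n] F_carrier [OF n] g a by simp
qed

lemma rcos_F_mult_cong:
  assumes "k \<ge> 1" and "F k #> a = F k #> b" and "F k #> c = F k #> d"
    and "a \<in> carrier G" "b \<in> carrier G" "c \<in> carrier G" "d \<in> carrier G"
  shows "F k #> (a \<otimes> c) = F k #> (b \<otimes> d)"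
  using assms normal.rcos_sum [OF normal_F [OF assms(1)]] by metis

lemma rcos_F_mult_left:
  "k \<ge> 1 \<Longrightarrow> a \<in> F k \<Longrightarrow> x \<in> carrier G \<Longrightarrow> F k #> (a \<otimes> x) = F k #> x"
  by (simp add: coset_mult_assoc [symmetric] F_subset_carrier F_carrier coset_join2 subgroup_F)

lemma rcos_F_mult_right:
  assumes k: "k \<ge> 1" and a: "a \<in> F k" and x: "x \<in> carrier G"
  shows "F k #> (x \<otimes> a) = F k #> x"
proof -
  have "F k #> a = F k #> \<one>"
    using k a by (simp add: coset_join2 subgroup_F F_subset_carrier F_carrier)
  then have "F k #> (x \<otimes> a) = F k #> (x \<otimes> \<one>)"
    using k a x by (intro rcos_F_mult_cong) (auto simp: F_carrier)
  then show ?thesis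
    using x by simp
qed

lemma rcos_F_conj:
  assumes "n \<ge> 1" "g \<in> carrier G" "a \<in> F n"
  shows "F (Suc n) #> (g \<otimes> a \<otimes> inv g) = F (Suc n) #> a"
  using assms by (simp add: conj_eq_gcomm_mult gcomm_F_Suc rcos_F_mult_left F_carrier)

lemma rcos_gcomm_mult_left:
  assumes n: "n \<ge> 1" and m: "m \<ge> 1" and a: "a \<in> F (Suc n)" and x: "x \<in> F n" and y: "y \<in> F m"
  shows "F (Suc (n + m)) #> gcomm G (a \<otimes> x) y = F (Suc (n + m)) #> gcomm G x y"
proof -
  have [simp]: "a \<in> carrier G" "x \<in> carrier G" "y \<in> carrier G"
    using F_carrier assms by auto
  have c: "gcomm G x y \<in> F (n + m)"
    using gcomm_F [OF n m x y] .
  have "gcomm G (a \<otimes> x) y = a \<otimes> gcomm G x y \<otimes> inv a \<otimes> gcomm G a y"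
    by (simp add: group_word_simps)
  also have "F (Suc (n + m)) #> \<dots> = F (Suc (n + m)) #> (a \<otimes> gcomm G x y \<otimes> inv a)"
    using gcomm_F [of "Suc n" m a y] c n m a y by (intro rcos_F_mult_right) (auto simp: F_carrier)
  also have "\<dots> = F (Suc (n + m)) #> gcomm G x y"
    using c n by (intro rcos_F_conj) auto
  finally show ?thesis .
qed

lemma rcos_gcomm_mult_right:
  assumes n: "n \<ge> 1" and m: "m \<ge> 1" and b: "b \<in> F (Suc m)" and x: "x \<in> F n" and y: "y \<in> F m"
  shows "F (Suc (n + m)) #> gcomm G x (b \<otimes> y) = F (Suc (n + m)) #> gcomm G x y"
proof -
  have [simp]: "b \<in> carrier G" "x \<in> carrier G" "y \<in> carrier G"
    using F_carrier assms by auto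
  have c: "gcomm G x y \<in> F (n + m)"
    using gcomm_F [OF n m x y] .
  have "gcomm G x (b \<otimes> y) = gcomm G x b \<otimes> (b \<otimes> gcomm G x y \<otimes> inv b)"
    by (simp add: group_word_simps)
  also have "F (Suc (n + m)) #> \<dots> = F (Suc (n + m)) #> (b \<otimes> gcomm G x y \<otimes> inv b)"
    using gcomm_F [of n "Suc m" x b] c n m b x by (intro rcos_F_mult_left) (auto simp: F_carrier)
  also have "\<dots> = F (Suc (n + m)) #> gcomm G x y"
    using c n by (intro rcos_F_conj) auto
  finally show ?thesis .
qed

lemma carrier_grp: "carrier (grp G F k) = (\<lambda>x. F (Suc k) #> x) ` F k"
  unfolding grp_def carrier_FactGroup by (simp add: r_coset_def)

lemma mult_grp: "A \<otimes>\<^bsub>grp G F k\<^esub> B = A <#> B"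
  unfolding grp_def mult_FactGroup by (simp add: set_mult_def)

lemma rcos_mult_grp:
  "k \<ge> 1 \<Longrightarrow> x \<in> carrier G \<Longrightarrow> y \<in> carrier G
    \<Longrightarrow> (F (Suc k) #> x) \<otimes>\<^bsub>grp G F k\<^esub> (F (Suc k) #> y) = F (Suc k) #> (x \<otimes> y)"
  by (simp add: mult_grp normal.rcos_sum [OF normal_F])

lemma comm_group_grp:
  assumes k: "k \<ge> 1"
  shows "comm_group (grp G F k)"
proof -
  have "F (Suc k) \<lhd> G\<lparr>carrier := F k\<rparr>"
    using k by (intro normal_restrict_supergroup subgroup_F normal_F F_Suc_subset) auto
  then have "group (grp G F k)"
    unfolding grp_def by (rule normal.factorgroup_is_group)
  then show ?thesis
  proof (rule group.group_comm_groupI)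
    fix A B assume "A \<in> carrier (grp G F k)" "B \<in> carrier (grp G F k)"
    then obtain x y where x: "x \<in> F k" "A = F (Suc k) #> x" and y: "y \<in> F k" "B = F (Suc k) #> y"
      by (auto simp: carrier_grp)
    have [simp]: "x \<in> carrier G" "y \<in> carrier G"
      using k x y F_carrier by auto
    have "gcomm G x y \<in> F (Suc k)"
      using gcomm_F [OF k k x(1) y(1)] F_antimono [of "Suc k" "k + k"] k by auto
    moreover have "x \<otimes> y = gcomm G x y \<otimes> (y \<otimes> x)"
      by (simp add: group_word_simps)
    ultimately have "F (Suc k) #> (x \<otimes> y) = F (Suc k) #> (y \<otimes> x)"
      by (simp add: rcos_F_mult_left)
    then show "A \<otimes>\<^bsub>grp G F k\<^esub> B = B \<otimes>\<^bsub>grp G F k\<^esub> A"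
      using k by (simp add: x y rcos_mult_grp)
  qed
qed

lemma grbr_rcos:
  assumes n: "n \<ge> 1" and m: "m \<ge> 1" and x: "x \<in> F n" and y: "y \<in> F m"
  shows "grbr G F n m (F (Suc n) #> x) (F (Suc m) #> y) = F (Suc (n + m)) #> gcomm G x y"
proof -
  obtain a where a: "a \<in> F (Suc n)" and sx: "(SOME x'. x' \<in> F (Suc n) #> x) = a \<otimes> x"
    using some_in_rcos [of "F (Suc n)" x] subgroup_F [of "Suc n"] F_carrier [OF n x] by auto
  obtain b where b: "b \<in> F (Suc m)" and sy: "(SOME y'. y' \<in> F (Suc m) #> y) = b \<otimes> y"
    using some_in_rcos [of "F (Suc m)" y] subgroup_F [of "Suc m"] F_carrier [OF m y] by auto
  have ax: "a \<otimes> x \<in> F n"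
    using a x F_Suc_subset [OF n] F_mult [OF n] by blast
  have "grbr G F n m (F (Suc n) #> x) (F (Suc m) #> y) = F (Suc (n + m)) #> gcomm G (a \<otimes> x) (b \<otimes> y)"
    by (simp add: grbr_def sx sy)
  also have "\<dots> = F (Suc (n + m)) #> gcomm G (a \<otimes> x) y"
    using rcos_gcomm_mult_right [OF n m b ax y] .
  also have "\<dots> = F (Suc (n + m)) #> gcomm G x y"
    using rcos_gcomm_mult_left [OF n m a x y] .
  finally show ?thesis .
qed

lemma grbr_closed:
  assumes n: "n \<ge> 1" and m: "m \<ge> 1"
    and A: "A \<in> carrier (grp G F n)" and B: "B \<in> carrier (grp G F m)"
  shows "grbr G F n m A B \<in> carrier (grp G F (n + m))"
proof -
  obtain x y where "x \<in> F n" "A = F (Suc n) #> x" "y \<in> F m" "B = F (Suc m) #> y"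
    using A B by (auto simp: carrier_grp)
  then show ?thesis
    using gcomm_F [OF n m] by (simp add: grbr_rcos [OF n m] carrier_grp)
qed

lemma unique_roots_grp:
  assumes ud: "gr_uniquely_divisible G F" and k: "k \<ge> 1" and d: "d > 0"
  shows "\<forall>C\<in>carrier (grp G F k). \<exists>!B. B \<in> carrier (grp G F k) \<and> B [^]\<^bsub>grp G F k\<^esub> (d::int) = C"
proof
  fix C assume C: "C \<in> carrier (grp G F k)"
  have "\<exists>!B. B \<in> carrier (grp G F k) \<and> B [^]\<^bsub>grp G F k\<^esub> nat d = C"
    using ud [unfolded gr_uniquely_divisible_def, rule_format, OF k C, of "nat d"] d by simp
  moreover have "B [^]\<^bsub>grp G F k\<^esub> d = B [^]\<^bsub>grp G F k\<^esub> nat d" for B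
    using d int_pow_int [of "grp G F k" B "nat d"] by simp
  ultimately show "\<exists>!B. B \<in> carrier (grp G F k) \<and> B [^]\<^bsub>grp G F k\<^esub> d = C"
    by simp
qed

end

section \<open>The graded Rota--Baxter operator\<close>

locale filtered_rota_baxter = filtration +
  fixes R :: "'a \<Rightarrow> 'a"
  assumes filtered_rota_baxter_group: "filtered_rota_baxter_group G F R"
begin

lemma R_F: "n \<ge> 1 \<Longrightarrow> x \<in> F n \<Longrightarrow> R x \<in> F n"
  using filtered_rota_baxter_group by (auto simp: filtered_rota_baxter_group_def)

sublocale rota_baxter G R
proof
  show "rota_baxter_group G R"
    using filtered_rota_baxter_group by (simp add: filtered_rota_baxter_group_def)
  show "R x \<in> carrier G" if "x \<in> carrier G" for x
    using R_F [of 1 x] that unfolding F_1 by simp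
qed

lemma rcos_R_cong:
  assumes k: "k \<ge> 1" and x: "x \<in> carrier G" and x': "x' \<in> carrier G"
    and eq: "F k #> x' = F k #> x"
  shows "F k #> R x' = F k #> R x"
proof -
  have "x' \<in> F k #> x"
    using rcos_self [OF x' subgroup_F [OF k]] eq by simp
  then obtain a where a: "a \<in> F k" and x'_eq: "x' = a \<otimes> x"
    unfolding r_coset_def by blast
  define h where "h = inv (x \<otimes> R x) \<otimes> a \<otimes> (x \<otimes> R x)"
  have h: "h \<in> F k"
    unfolding h_def using normal.inv_op_closed1 [OF normal_F [OF k]] a x by simp
  have "x \<otimes> R x \<otimes> h \<otimes> inv (R x) = x'"
    unfolding h_def x'_eq using a x F_carrier [OF k] by (simp add: group_word_simps)
  then have "R x' = R x \<otimes> R h"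
    using R_mult [of x h] x h F_carrier [OF k] by simp
  then show ?thesis
    using rcos_F_mult_right [OF k R_F [OF k h]] x by simp
qed

lemma grR_rcos:
  assumes k: "k \<ge> 1" and x: "x \<in> carrier G"
  shows "grR G F R k (F (Suc k) #> x) = F (Suc k) #> R x"
proof -
  obtain a where a: "a \<in> F (Suc k)" and s: "(SOME y. y \<in> F (Suc k) #> x) = a \<otimes> x"
    using some_in_rcos [of "F (Suc k)" x] subgroup_F [of "Suc k"] x by auto
  have "F (Suc k) #> (a \<otimes> x) = F (Suc k) #> x"
    using a x by (simp add: rcos_F_mult_left)
  then show ?thesis
    unfolding grR_def s using a x F_carrier [of "Suc k"] by (intro rcos_R_cong) auto
qed

lemma grR_hom:
  assumes k: "k \<ge> 1"
  shows "grR G F R k \<in> hom (grp G F k) (grp G F k)"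
proof (rule homI)
  fix A assume "A \<in> carrier (grp G F k)"
  then obtain x where "x \<in> F k" "A = F (Suc k) #> x"
    by (auto simp: carrier_grp)
  then show "grR G F R k A \<in> carrier (grp G F k)"
    using k R_F F_carrier by (simp add: grR_rcos carrier_grp)
next
  fix A B assume "A \<in> carrier (grp G F k)" "B \<in> carrier (grp G F k)"
  then obtain x y where x: "x \<in> F k" "A = F (Suc k) #> x" and y: "y \<in> F k" "B = F (Suc k) #> y"
    by (auto simp: carrier_grp)
  have [simp]: "x \<in> carrier G" "y \<in> carrier G"
    using k x y F_carrier by auto
  have "F (Suc k) #> (x \<otimes> (R x \<otimes> y \<otimes> inv (R x))) = F (Suc k) #> (x \<otimes> y)"
    using k y by (intro rcos_F_mult_cong rcos_F_conj) auto
  then have "F (Suc k) #> R (x \<otimes> y) = F (Suc k) #> R (x \<otimes> R x \<otimes> y \<otimes> inv (R x))"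
    using k by (intro rcos_R_cong) (simp_all add: m_assoc)
  also have "\<dots> = F (Suc k) #> (R x \<otimes> R y)"
    by (simp add: R_mult)
  finally show "grR G F R k (A \<otimes>\<^bsub>grp G F k\<^esub> B) = grR G F R k A \<otimes>\<^bsub>grp G F k\<^esub> grR G F R k B"
    using k by (simp add: x y rcos_mult_grp grR_rcos)
qed

lemma group_hom_grR: "k \<ge> 1 \<Longrightarrow> group_hom (grp G F k) (grp G F k) (grR G F R k)"
  using comm_group_grp grR_hom
  by (simp add: group_hom_def group_hom_axioms_def comm_group.axioms(2))

lemma rcos_gcomm_R:
  assumes n: "n \<ge> 1" and m: "m \<ge> 1" and x: "x \<in> F n" and y: "y \<in> F m"
  shows "F (Suc (n + m)) #> gcomm G (R x) (R y)
    = F (Suc (n + m)) #> R (gcomm G (R x) y \<otimes> gcomm G x (R y) \<otimes> gcomm G x y)"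
proof -
  let ?N = "F (Suc (n + m))"
  have nm: "n + m \<ge> 1"
    using n by simp
  have [simp]: "x \<in> carrier G" "y \<in> carrier G"
    using n m x y F_carrier by auto
  define u where "u = x \<otimes> R x \<otimes> y \<otimes> inv (R x)"
  define v where "v = y \<otimes> R y \<otimes> x \<otimes> inv (R y)"
  define t where "t = gcomm G (R x) (R y)"
  have [simp]: "u \<in> carrier G" "v \<in> carrier G" "t \<in> carrier G"
    by (simp_all add: u_def v_def t_def)
  have t_F: "t \<in> F (n + m)"
    unfolding t_def using gcomm_F [OF n m R_F [OF n x] R_F [OF m y]] .
  have uv: "u \<otimes> inv v = (x \<otimes> gcomm G (R x) y \<otimes> inv x)
      \<otimes> ((x \<otimes> y \<otimes> inv x) \<otimes> gcomm G x (R y) \<otimes> inv (x \<otimes> y \<otimes> inv x)) \<otimes> gcomm G x y"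
    unfolding u_def v_def by (simp add: group_word_simps)
  have t_R: "t = R (u \<otimes> inv v \<otimes> gcomm G v t)"
    unfolding u_def v_def t_def by (rule gcomm_R_R) simp_all
  have "?N #> (u \<otimes> inv v \<otimes> gcomm G v t) = ?N #> (u \<otimes> inv v)"
    using gcomm_F_Suc [OF nm _ t_F] nm by (intro rcos_F_mult_right) auto
  also have "\<dots> = ?N #> (gcomm G (R x) y \<otimes> gcomm G x (R y) \<otimes> gcomm G x y)"
    unfolding uv using gcomm_F [OF n m R_F [OF n x] y] gcomm_F [OF n m x R_F [OF m y]] nm
    by (intro rcos_F_mult_cong rcos_F_conj) auto
  finally have "?N #> R (u \<otimes> inv v \<otimes> gcomm G v t)
      = ?N #> R (gcomm G (R x) y \<otimes> gcomm G x (R y) \<otimes> gcomm G x y)"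
    using nm by (intro rcos_R_cong) auto
  then show ?thesis
    unfolding t_def [symmetric] by (simp only: t_R [symmetric])
qed

lemma grbr_grR:
  assumes n: "n \<ge> 1" and m: "m \<ge> 1"
    and A: "A \<in> carrier (grp G F n)" and B: "B \<in> carrier (grp G F m)"
  shows "grbr G F n m (grR G F R n A) (grR G F R m B)
    = grR G F R (n + m) (grbr G F n m (grR G F R n A) B \<otimes>\<^bsub>grp G F (n + m)\<^esub>
        grbr G F n m A (grR G F R m B) \<otimes>\<^bsub>grp G F (n + m)\<^esub> grbr G F n m A B)"
proof -
  obtain x y where x: "x \<in> F n" "A = F (Suc n) #> x" and y: "y \<in> F m" "B = F (Suc m) #> y"
    using A B by (auto simp: carrier_grp)
  have nm: "n + m \<ge> 1"
    using n by simp
  have [simp]: "x \<in> carrier G" "y \<in> carrier G"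
    using n m x y F_carrier by auto
  show ?thesis
    using rcos_gcomm_R [OF n m x(1) y(1)] n m nm R_F x y
    by (simp add: grR_rcos grbr_rcos rcos_mult_grp)
qed

lemma grR_one: "k \<ge> 1 \<Longrightarrow> grR G F R k \<one>\<^bsub>grp G F k\<^esub> = \<one>\<^bsub>grp G F k\<^esub>"
  by (rule group_hom.hom_one [OF group_hom_grR])

lemma grR_closed: "k \<ge> 1 \<Longrightarrow> A \<in> carrier (grp G F k) \<Longrightarrow> grR G F R k A \<in> carrier (grp G F k)"
  by (rule hom_in_carrier [OF grR_hom])

lemma grR_qact:
  assumes ud: "gr_uniquely_divisible G F" and k: "k \<ge> 1" and A: "A \<in> carrier (grp G F k)"
  shows "grR G F R k (qact G F k q A) = qact G F k q (grR G F R k A)"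
proof -
  interpret grp: comm_group "grp G F k"
    using comm_group_grp [OF k] .
  show ?thesis
    unfolding qact_def
    by (rule grp.hom_the_root [OF grR_hom [OF k] A unique_roots_grp [OF ud k quotient_of_denom_pos']])
qed

lemma gr_map_closed:
  assumes f: "f \<in> gr_carrier G F"
  shows "gr_map G F R f \<in> gr_carrier G F"
proof -
  have "gr_map G F R f n = \<one>\<^bsub>grp G F n\<^esub>" if "f n = \<one>\<^bsub>grp G F n\<^esub>" for n
  proof (cases "n = 0")
    case True
    then show ?thesis
      using f that by (simp add: gr_map_def gr_carrier_def)
  next
    case False
    then show ?thesis
      using that grR_one [of n] by (simp add: gr_map_def)
  qed
  then have "{n. gr_map G F R f n \<noteq> \<one>\<^bsub>grp G F n\<^esub>} \<subseteq> {n. f n \<noteq> \<one>\<^bsub>grp G F n\<^esub>}"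
    by blast
  then have "finite {n. gr_map G F R f n \<noteq> \<one>\<^bsub>grp G F n\<^esub>}"
    using f finite_subset unfolding gr_carrier_def by blast
  then show ?thesis
    using f grR_closed unfolding gr_carrier_def by (simp add: gr_map_def)
qed

lemma gr_map_add:
  assumes "f \<in> gr_carrier G F" and "g \<in> gr_carrier G F"
  shows "gr_map G F R (gr_add G F f g) = gr_add G F (gr_map G F R f) (gr_map G F R g)"
proof
  fix n
  show "gr_map G F R (gr_add G F f g) n = gr_add G F (gr_map G F R f) (gr_map G F R g) n"
    using assms hom_mult [OF grR_hom [of n]] by (auto simp: gr_map_def gr_add_def gr_carrier_def)
qed

lemma gr_map_smult:
  assumes "gr_uniquely_divisible G F" and "f \<in> gr_carrier G F"
  shows "gr_map G F R (gr_smult G F q f) = gr_smult G F q (gr_map G F R f)"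
proof
  fix n
  show "gr_map G F R (gr_smult G F q f) n = gr_smult G F q (gr_map G F R f) n"
    using assms grR_qact [of n] by (auto simp: gr_map_def gr_smult_def gr_carrier_def)
qed

lemma gr_bracket_eq:
  "k \<ge> 1 \<Longrightarrow> gr_bracket G F f g k
    = finprod (grp G F k) (\<lambda>i. grbr G F i (k - i) (f i) (g (k - i))) {1..<k}"
  by (simp add: gr_bracket_def)

lemma gr_bracket_terms_closed:
  assumes "f \<in> gr_carrier G F" and "g \<in> gr_carrier G F"
  shows "(\<lambda>i. grbr G F i (k - i) (f i) (g (k - i))) \<in> {1..<k} \<rightarrow> carrier (grp G F k)"
proof
  fix i assume i: "i \<in> {1..<k}"
  then have "grbr G F i (k - i) (f i) (g (k - i)) \<in> carrier (grp G F (i + (k - i)))"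
    using assms by (intro grbr_closed) (auto simp: gr_carrier_def)
  then show "grbr G F i (k - i) (f i) (g (k - i)) \<in> carrier (grp G F k)"
    using i by simp
qed

lemma gr_bracket_grR_component:
  assumes f: "f \<in> gr_carrier G F" and g: "g \<in> gr_carrier G F" and k: "k \<ge> 1"
  shows "gr_bracket G F (gr_map G F R f) (gr_map G F R g) k
    = grR G F R k (gr_bracket G F (gr_map G F R f) g k \<otimes>\<^bsub>grp G F k\<^esub>
        gr_bracket G F f (gr_map G F R g) k \<otimes>\<^bsub>grp G F k\<^esub> gr_bracket G F f g k)"
proof -
  interpret grp: comm_group "grp G F k"
    using comm_group_grp [OF k] .
  let ?Rf = "gr_map G F R f" and ?Rg = "gr_map G F R g"
  define br where "br u v = (\<lambda>i. grbr G F i (k - i) (u i) (v (k - i)))" for u v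
  have Rf: "?Rf \<in> gr_carrier G F" and Rg: "?Rg \<in> gr_carrier G F"
    using f g by (simp_all add: gr_map_closed)
  have terms: "br u v \<in> {1..<k} \<rightarrow> carrier (grp G F k)"
    if "u \<in> gr_carrier G F" "v \<in> gr_carrier G F" for u v
    unfolding br_def using gr_bracket_terms_closed [OF that] .
  have pointwise: "br ?Rf ?Rg i
      = grR G F R k (br ?Rf g i \<otimes>\<^bsub>grp G F k\<^esub> br f ?Rg i \<otimes>\<^bsub>grp G F k\<^esub> br f g i)"
    if i: "i \<in> {1..<k}" for i
    using grbr_grR [of i "k - i" "f i" "g (k - i)"] f g i
    by (auto simp: br_def gr_map_def gr_carrier_def)
  have "gr_bracket G F ?Rf ?Rg k = finprod (grp G F k) (br ?Rf ?Rg) {1..<k}"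
    using k by (simp add: gr_bracket_eq br_def)
  also have "\<dots> = finprod (grp G F k)
      (grR G F R k \<circ> (\<lambda>i. br ?Rf g i \<otimes>\<^bsub>grp G F k\<^esub> br f ?Rg i \<otimes>\<^bsub>grp G F k\<^esub> br f g i)) {1..<k}"
    using terms [OF Rf g] terms [OF f Rg] terms [OF f g] k
    by (intro grp.finprod_cong') (auto simp: pointwise grR_closed [OF k] Pi_def)
  also have "\<dots> = grR G F R k (finprod (grp G F k)
      (\<lambda>i. br ?Rf g i \<otimes>\<^bsub>grp G F k\<^esub> br f ?Rg i \<otimes>\<^bsub>grp G F k\<^esub> br f g i) {1..<k})"
    using terms [OF Rf g] terms [OF f Rg] terms [OF f g]
    by (intro grp.hom_finprod [symmetric] grR_hom k comm_group_grp) auto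
  also have "\<dots> = grR G F R k (finprod (grp G F k) (br ?Rf g) {1..<k}
      \<otimes>\<^bsub>grp G F k\<^esub> finprod (grp G F k) (br f ?Rg) {1..<k}
      \<otimes>\<^bsub>grp G F k\<^esub> finprod (grp G F k) (br f g) {1..<k})"
    using terms [OF Rf g] terms [OF f Rg] terms [OF f g] by (simp add: Pi_def)
  finally show ?thesis
    using k by (simp add: gr_bracket_eq br_def)
qed

lemma gr_map_bracket:
  assumes "f \<in> gr_carrier G F" and "g \<in> gr_carrier G F"
  shows "gr_bracket G F (gr_map G F R f) (gr_map G F R g)
    = gr_map G F R (gr_add G F (gr_add G F (gr_bracket G F (gr_map G F R f) g)
        (gr_bracket G F f (gr_map G F R g))) (gr_bracket G F f g))"
proof
  fix k
  show "gr_bracket G F (gr_map G F R f) (gr_map G F R g) k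
    = gr_map G F R (gr_add G F (gr_add G F (gr_bracket G F (gr_map G F R f) g)
        (gr_bracket G F f (gr_map G F R g))) (gr_bracket G F f g)) k"
    using assms gr_bracket_grR_component [of f g k]
    by (cases "k = 0") (simp_all add: gr_bracket_def gr_map_def gr_add_def)
qed

end

theorem proposition5p13:
  fixes G :: "('a, 'b) monoid_scheme" and F :: "nat \<Rightarrow> 'a set" and R :: "'a \<Rightarrow> 'a"
  assumes "filtered_rota_baxter_group G F R"
    and "gr_uniquely_divisible G F"
  shows "(\<forall>f\<in>gr_carrier G F. gr_map G F R f \<in> gr_carrier G F)
    \<and> (\<forall>f\<in>gr_carrier G F. \<forall>g\<in>gr_carrier G F.
          gr_map G F R (gr_add G F f g) = gr_add G F (gr_map G F R f) (gr_map G F R g))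
    \<and> (\<forall>q. \<forall>f\<in>gr_carrier G F.
          gr_map G F R (gr_smult G F q f) = gr_smult G F q (gr_map G F R f))
    \<and> (\<forall>f\<in>gr_carrier G F. \<forall>g\<in>gr_carrier G F.
          gr_bracket G F (gr_map G F R f) (gr_map G F R g)
          = gr_map G F R (gr_add G F (gr_add G F (gr_bracket G F (gr_map G F R f) g)
                                                  (gr_bracket G F f (gr_map G F R g)))
                                     (gr_bracket G F f g)))"
proof -
  interpret filtered_rota_baxter G F R
    using assms(1) by unfold_locales (simp_all add: filtered_rota_baxter_group_def)
  show ?thesis
    using gr_map_closed gr_map_add gr_map_smult [OF assms(2)] gr_map_bracket by blast
qed

end
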